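(* Let $\alpha>0$ and $p_0\in L^1(\mathbb{R})\cap L^\infty(\mathbb{R})$ with $p_0\ge0$, $\int_{\mathbb{R}}p_0=1$ and $D(p_0)=0$. Then $F_{p_0}\in C^0([0,+\infty))\cap C^\infty((0,+\infty))$, $F_{p_0}>0$ on $(0,+\infty)$, and $F_{p_0}'>0$ on $(0,+\infty)$.
   Context: For $f\in L^1(\mathbb{R})$, $D(f)=\alpha\int_{|\sigma|>1}f(\sigma)\,d\sigma$. For $\eta>0$, $\varphi_\eta(x)=\frac{1}{\sqrt{2\pi}\eta}e^{-x^2/(2\eta^2)}$. $F_{p_0}:[0,+\infty)\to[0,+\infty)$ is defined by $F_{p_0}(0)=D(p_0)$ and, for $x>0$, $F_{p_0}(x)=\alpha\int_{|\sigma|>1}\Big(\int_{\mathbb{R}}p_0(\sigma')\varphi_{\sqrt{2x}}(\sigma-\sigma')\,d\sigma'\Big)d\sigma$. *)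

theory Defs
  imports "HOL-Analysis.Analysis"
begin

definition D_fun :: "real \<Rightarrow> (real \<Rightarrow> real) \<Rightarrow> real" where
  "D_fun \<alpha> f = \<alpha> * (LINT \<sigma>:{\<sigma>. 1 < \<bar>\<sigma>\<bar>}|lborel. f \<sigma>)"

definition gauss :: "real \<Rightarrow> real \<Rightarrow> real" where
  "gauss \<eta> x = 1 / (sqrt (2 * pi) * \<eta>) * exp (- (x\<^sup>2) / (2 * \<eta>\<^sup>2))"

text \<open>F_{p0} on [0,+infty) (values at negative arguments are irrelevant).\<close>
definition F_fun :: "real \<Rightarrow> (real \<Rightarrow> real) \<Rightarrow> real \<Rightarrow> real" where
  "F_fun \<alpha> p0 x = (if x = 0 then D_fun \<alpha> p0
     else \<alpha> * (LINT \<sigma>:{\<sigma>. 1 < \<bar>\<sigma>\<bar>}|lborel.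
                 (LINT \<sigma>'|lborel. p0 \<sigma>' * gauss (sqrt (2 * x)) (\<sigma> - \<sigma>'))))"

definition smooth_on_open :: "real set \<Rightarrow> (real \<Rightarrow> real) \<Rightarrow> bool" where
  "smooth_on_open S f \<longleftrightarrow> (\<forall>k. \<forall>x\<in>S. ((deriv ^^ k) f) differentiable (at x))"

end

(*
  Put eta = sqrt (2 x) and let Q be the standard Gaussian tail.  By Fubini, integrating the
  Gaussian smoothing of p0 over |sigma| > 1 gives F(x) = alpha * H(1 / eta) with
    H(t) = integral of p0(s) * (Q((1 - s) t) + Q((1 + s) t)) ds.
  Since p0 >= 0 and D(p0) = 0, p0 vanishes a.e. outside (-1, 1), so the dilation factors
  1 - s and 1 + s are positive and bounded on its support.  Differentiating under the integral
  sign shows that H is smooth, positive and strictly decreasing (Q' = -phi < 0), and dominated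
  convergence gives H(t) --> 0 as t --> infinity.  As x |-> 1 / sqrt (2 x) is smooth and
  decreasing on (0, infinity) and tends to infinity at 0+, F is smooth, positive and increasing
  there, and continuous at 0, where F(0) = D(p0) = 0.
*)
theory Submission
  imports Defs "HOL-Probability.Distributions" "HOL-Real_Asymp.Real_Asymp"
begin

section \<open>Functions with finitely many derivatives\<close>

(* A graded form of smooth_on_open: closure under sums, products and composition is proved
   by induction on the number of derivatives. *)
definition differentiable_upto :: "nat \<Rightarrow> real set \<Rightarrow> (real \<Rightarrow> real) \<Rightarrow> bool" where
  "differentiable_upto n S f \<longleftrightarrow> (\<forall>k\<le>n. \<forall>x\<in>S. ((deriv ^^ k) f) differentiable (at x))"

lemma smooth_on_open_iff_differentiable_upto:
  "smooth_on_open S f \<longleftrightarrow> (\<forall>n. differentiable_upto n S f)"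
  by (auto simp: smooth_on_open_def differentiable_upto_def)

lemma differentiable_upto_0: "differentiable_upto 0 S f \<longleftrightarrow> (\<forall>x\<in>S. f differentiable (at x))"
  by (simp add: differentiable_upto_def)

lemma differentiable_upto_Suc:
  "differentiable_upto (Suc n) S f \<longleftrightarrow>
     (\<forall>x\<in>S. f differentiable (at x)) \<and> differentiable_upto n S (deriv f)"
proof -
  have "(\<forall>k\<le>Suc n. P k) \<longleftrightarrow> P 0 \<and> (\<forall>k\<le>n. P (Suc k))" for P :: "nat \<Rightarrow> bool"
    by (metis Suc_le_mono le0 not0_implies_Suc)
  then show ?thesis
    unfolding differentiable_upto_def by (simp only: funpow_0 funpow_Suc_right o_def)
qed

lemma differentiable_upto_SucD: "differentiable_upto (Suc n) S f \<Longrightarrow> differentiable_upto n S f"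
  by (simp add: differentiable_upto_def)

lemma differentiable_upto_imp_has_real_derivative:
  "differentiable_upto n S f \<Longrightarrow> x \<in> S \<Longrightarrow> (f has_real_derivative deriv f x) (at x)"
  by (metis DERIV_deriv_iff_real_differentiable differentiable_upto_def funpow_0 le0)

lemma differentiable_upto_has_real_derivative_iter:
  "differentiable_upto n S f \<Longrightarrow> k \<le> n \<Longrightarrow> x \<in> S \<Longrightarrow>
     ((deriv ^^ k) f has_real_derivative (deriv ^^ Suc k) f x) (at x)"
  by (simp add: differentiable_upto_def DERIV_deriv_iff_real_differentiable)

lemma differentiable_upto_continuous_on_iter:
  "differentiable_upto n S f \<Longrightarrow> k \<le> n \<Longrightarrow> continuous_on S ((deriv ^^ k) f)"
  by (meson DERIV_isCont continuous_at_imp_continuous_on differentiable_upto_has_real_derivative_iter)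

lemma differentiable_upto_cong:
  assumes "open S" "\<And>x. x \<in> S \<Longrightarrow> f x = g x" "differentiable_upto n S f"
  shows "differentiable_upto n S g"
  using assms(2,3)
proof (induction n arbitrary: f g)
  case 0
  then show ?case
    using has_field_derivative_transform_within_open[OF _ \<open>open S\<close>]
    by (metis differentiable_upto_0 differentiable_upto_imp_has_real_derivative real_differentiable_def)
next
  case (Suc n)
  have "(f has_real_derivative deriv f x) (at x)" if "x \<in> S" for x
    using Suc.prems(2) that by (rule differentiable_upto_imp_has_real_derivative)
  then have g': "(g has_real_derivative deriv f x) (at x)" if "x \<in> S" for x
    using has_field_derivative_transform_within_open[OF _ \<open>open S\<close> that] Suc.prems(1) that by blast
  have "differentiable_upto n S (deriv g)"
  proof (rule Suc.IH)
    show "deriv f x = deriv g x" if "x \<in> S" for x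
      using g'[OF that] by (simp add: DERIV_imp_deriv)
    show "differentiable_upto n S (deriv f)"
      using Suc.prems(2) by (simp add: differentiable_upto_Suc)
  qed
  then show ?case
    using g' by (auto simp: differentiable_upto_Suc real_differentiable_def)
qed

lemma differentiable_upto_const: "differentiable_upto n S (\<lambda>x. c)"
proof (induction n arbitrary: c)
  case (Suc n)
  have "deriv (\<lambda>x. c) = (\<lambda>x. 0)" by auto
  with Suc show ?case by (simp add: differentiable_upto_Suc)
qed (simp add: differentiable_upto_0)

lemma differentiable_upto_ident: "differentiable_upto n S (\<lambda>x. x)"
proof (cases n)
  case (Suc m)
  have "deriv (\<lambda>x. x) = (\<lambda>x. 1)" by auto
  with Suc show ?thesis by (simp add: differentiable_upto_Suc differentiable_upto_const)
qed (simp add: differentiable_upto_0)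

lemma differentiable_upto_add:
  assumes "open S" "differentiable_upto n S f" "differentiable_upto n S g"
  shows "differentiable_upto n S (\<lambda>x. f x + g x)"
  using assms(2,3)
proof (induction n arbitrary: f g)
  case (Suc n)
  have "deriv f x + deriv g x = deriv (\<lambda>x. f x + g x) x" if "x \<in> S" for x
    using Suc.prems[THEN differentiable_upto_imp_has_real_derivative, OF that]
    by (intro DERIV_imp_deriv[symmetric] derivative_eq_intros) auto
  moreover have "differentiable_upto n S (\<lambda>x. deriv f x + deriv g x)"
    using Suc by (simp add: differentiable_upto_Suc)
  ultimately have "differentiable_upto n S (deriv (\<lambda>x. f x + g x))"
    by (rule differentiable_upto_cong[OF \<open>open S\<close>])
  then show ?case
    using Suc.prems by (auto simp: differentiable_upto_Suc)
qed (auto simp: differentiable_upto_0)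

lemma differentiable_upto_mult:
  assumes "open S" "differentiable_upto n S f" "differentiable_upto n S g"
  shows "differentiable_upto n S (\<lambda>x. f x * g x)"
  using assms(2,3)
proof (induction n arbitrary: f g)
  case (Suc n)
  have "deriv f x * g x + f x * deriv g x = deriv (\<lambda>x. f x * g x) x" if "x \<in> S" for x
    using Suc.prems[THEN differentiable_upto_imp_has_real_derivative, OF that]
    by (intro DERIV_imp_deriv[symmetric] derivative_eq_intros) auto
  moreover have "differentiable_upto n S (\<lambda>x. deriv f x * g x + f x * deriv g x)"
    using Suc differentiable_upto_SucD
    by (intro differentiable_upto_add \<open>open S\<close>) (simp_all add: differentiable_upto_Suc)
  ultimately have "differentiable_upto n S (deriv (\<lambda>x. f x * g x))"
    by (rule differentiable_upto_cong[OF \<open>open S\<close>])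
  then show ?case
    using Suc.prems by (auto simp: differentiable_upto_Suc)
qed (auto simp: differentiable_upto_0)

lemma differentiable_upto_compose:
  assumes "open S" "g ` S \<subseteq> T" "differentiable_upto n T f" "differentiable_upto n S g"
  shows "differentiable_upto n S (\<lambda>x. f (g x))"
  using assms(3,4)
proof (induction n arbitrary: f)
  case 0
  show ?case
    unfolding differentiable_upto_0
  proof
    fix x assume "x \<in> S"
    then have "g differentiable (at x)" "f differentiable (at (g x))"
      using 0 assms(2) by (auto simp: differentiable_upto_0)
    then show "(\<lambda>x. f (g x)) differentiable (at x)"
      using differentiable_chain_at[of g x f] by (simp add: o_def)
  qed
next
  case (Suc n)
  have chain: "((\<lambda>x. f (g x)) has_real_derivative deriv f (g x) * deriv g x) (at x)" if "x \<in> S" for x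
  proof -
    have "g x \<in> T"
      using assms(2) that by blast
    show ?thesis
      by (rule DERIV_chain2[OF differentiable_upto_imp_has_real_derivative[OF Suc.prems(1) \<open>g x \<in> T\<close>]
            differentiable_upto_imp_has_real_derivative[OF Suc.prems(2) that]])
  qed
  have "differentiable_upto n S (\<lambda>x. deriv f (g x))"
    using Suc.prems(1) differentiable_upto_SucD[OF Suc.prems(2)]
    by (intro Suc.IH[of "deriv f"]) (simp_all add: differentiable_upto_Suc)
  then have "differentiable_upto n S (\<lambda>x. deriv f (g x) * deriv g x)"
    using Suc.prems(2) by (intro differentiable_upto_mult \<open>open S\<close>) (auto simp: differentiable_upto_Suc)
  then have "differentiable_upto n S (deriv (\<lambda>x. f (g x)))"
    by (rule differentiable_upto_cong[OF \<open>open S\<close>, rotated]) (simp add: DERIV_imp_deriv[OF chain])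
  then show ?case
    using chain by (auto simp: differentiable_upto_Suc real_differentiable_def)
qed

lemma differentiable_upto_powr: "differentiable_upto n {0<..} (\<lambda>x. x powr a)"
proof -
  have powr_differentiable: "(\<lambda>x. x powr a) differentiable (at x)" if "x \<in> {0<..}" for x a :: real
    using has_real_derivative_powr[of x a] that by (auto simp: real_differentiable_def)
  show ?thesis
  proof (induction n arbitrary: a)
    case 0
    show ?case
      using powr_differentiable by (simp add: differentiable_upto_0)
  next
    case (Suc n)
    have "differentiable_upto n {0<..} (\<lambda>x. a * x powr (a - 1))"
      by (rule differentiable_upto_mult[OF open_greaterThan differentiable_upto_const Suc.IH])
    moreover have "a * x powr (a - 1) = deriv (\<lambda>x. x powr a) x" if "x \<in> {0<..}" for x :: real
      using that by (simp add: DERIV_imp_deriv[OF has_real_derivative_powr])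
    ultimately have "differentiable_upto n {0<..} (deriv (\<lambda>x. x powr a))"
      by (rule differentiable_upto_cong[OF open_greaterThan, rotated])
    then show ?case
      using powr_differentiable by (simp add: differentiable_upto_Suc)
  qed
qed

section \<open>The Gaussian tail\<close>

lemma has_real_derivative_std_normal_density:
  "(std_normal_density has_real_derivative - x * std_normal_density x) (at x)"
proof -
  define c where "c = 1 / sqrt (2 * pi)"
  have eq: "std_normal_density = (\<lambda>x. c * exp (- x\<^sup>2 / 2))"
    by (intro ext) (simp add: std_normal_density_def c_def)
  show ?thesis
    unfolding eq by (auto intro!: derivative_eq_intros)
qed

lemma differentiable_upto_std_normal_density: "differentiable_upto n UNIV std_normal_density"
proof (induction n)
  case 0
  show ?case
    using has_real_derivative_std_normal_density by (auto simp: differentiable_upto_0 real_differentiable_def)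
next
  case (Suc n)
  have "deriv std_normal_density = (\<lambda>x. - x * std_normal_density x)"
    using has_real_derivative_std_normal_density by (auto intro: DERIV_imp_deriv)
  moreover have "differentiable_upto n UNIV (\<lambda>x. (- 1 * x) * std_normal_density x)"
    by (rule differentiable_upto_mult[OF open_UNIV
          differentiable_upto_mult[OF open_UNIV differentiable_upto_const differentiable_upto_ident] Suc.IH])
  ultimately show ?case
    using has_real_derivative_std_normal_density by (auto simp: differentiable_upto_Suc real_differentiable_def)
qed

definition gauss_tail :: "real \<Rightarrow> real" where
  "gauss_tail u = (LBINT z=ereal u..\<infinity>. std_normal_density z)"

lemma gauss_tail_eq_integral_indicator:
  "gauss_tail u = (\<integral>z. indicator {u<..} z * std_normal_density z \<partial>lborel)"
  by (simp add: gauss_tail_def interval_lebesgue_integral_def set_lebesgue_integral_def)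

lemma has_real_derivative_gauss_tail: "(gauss_tail has_real_derivative - std_normal_density u) (at u)"
proof -
  define a where "a = u - 1"
  have "set_integrable lborel A std_normal_density" if "A \<in> sets borel" for A
    unfolding set_integrable_def using that by (intro integrable_mult_indicator) auto
  then have "interval_lebesgue_integrable lborel a b std_normal_density" for a b
    by (simp add: interval_lebesgue_integrable_def)
  then have "(LBINT z=ereal a..ereal v. std_normal_density z) + gauss_tail v = gauss_tail a" for v
    unfolding gauss_tail_def by (rule interval_integral_sum)
  then have split: "gauss_tail = (\<lambda>v. gauss_tail a - (LBINT z=ereal a..ereal v. std_normal_density z))"
    by (auto simp: algebra_simps)
  have "continuous_on {a..u+1} std_normal_density"
    using has_real_derivative_std_normal_density by (meson DERIV_isCont continuous_at_imp_continuous_on)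
  then have "((\<lambda>v. LBINT z=ereal a..ereal v. std_normal_density z) has_vector_derivative std_normal_density u)
      (at u within {a..u+1})"
    by (intro interval_integral_FTC2) (auto simp: a_def)
  then have "((\<lambda>v. LBINT z=ereal a..ereal v. std_normal_density z) has_real_derivative std_normal_density u) (at u)"
    using at_within_Icc_at[of a u "u+1"] by (simp add: a_def has_real_derivative_iff_has_vector_derivative)
  then have "((\<lambda>v. gauss_tail a - (LBINT z=ereal a..ereal v. std_normal_density z))
      has_real_derivative 0 - std_normal_density u) (at u)"
    by (intro DERIV_diff DERIV_const)
  then show ?thesis
    by (simp flip: split)
qed

lemma deriv_gauss_tail: "deriv gauss_tail = (\<lambda>u. - std_normal_density u)"
  using DERIV_imp_deriv[OF has_real_derivative_gauss_tail] by auto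

lemma differentiable_upto_gauss_tail: "differentiable_upto n UNIV gauss_tail"
proof (cases n)
  case (Suc m)
  have "differentiable_upto m UNIV (\<lambda>u. - 1 * std_normal_density u)"
    by (intro differentiable_upto_mult differentiable_upto_const differentiable_upto_std_normal_density) simp
  then show ?thesis
    using Suc has_real_derivative_gauss_tail
    by (auto simp: differentiable_upto_Suc deriv_gauss_tail real_differentiable_def)
qed (use has_real_derivative_gauss_tail in \<open>auto simp: differentiable_upto_0 real_differentiable_def\<close>)

lemma continuous_on_gauss_tail: "continuous_on S gauss_tail"
  using has_real_derivative_gauss_tail by (meson DERIV_isCont continuous_at_imp_continuous_on)

lemma borel_measurable_gauss_tail[measurable]: "gauss_tail \<in> borel_measurable borel"
  by (rule borel_measurable_continuous_onI[OF continuous_on_gauss_tail])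

lemma gauss_tail_le_1: "gauss_tail u \<le> 1"
proof -
  have "gauss_tail u \<le> (\<integral>z. std_normal_density z \<partial>lborel)"
    unfolding gauss_tail_eq_integral_indicator
  proof (rule integral_mono)
    show "integrable lborel (\<lambda>z. indicator {u<..} z * std_normal_density z)"
      using integrable_mult_indicator[of "{u<..}" lborel std_normal_density] by simp
  qed (auto simp: indicator_def)
  then show ?thesis
    by simp
qed

lemma gauss_tail_pos: "0 < gauss_tail u"
proof -
  have "gauss_tail (u + 1) < gauss_tail u"
    using has_real_derivative_gauss_tail normal_density_pos[of 1]
    by (intro DERIV_neg_imp_decreasing[of u "u + 1"]) (auto intro!: exI)
  moreover have "0 \<le> gauss_tail (u + 1)"
    unfolding gauss_tail_eq_integral_indicator by (rule Bochner_Integration.integral_nonneg) (simp add: indicator_def)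
  ultimately show ?thesis
    by linarith
qed

lemma tendsto_gauss_tail_at_top: "(gauss_tail \<longlongrightarrow> 0) at_top"
proof -
  have "((\<lambda>u. \<integral>z. indicator {u<..} z * std_normal_density z \<partial>lborel) \<longlongrightarrow> (\<integral>(z::real). 0 \<partial>lborel)) at_top"
  proof (rule integral_dominated_convergence_at_top[where w=std_normal_density and M=lborel
        and s="\<lambda>u z. indicator {u<..} z * std_normal_density z" and f="\<lambda>z. 0"])
    show "AE z in lborel. ((\<lambda>u. indicator {u<..} z * std_normal_density z) \<longlongrightarrow> 0) at_top" for z
    proof (rule AE_I2, rule tendsto_eventually)
      show "\<forall>\<^sub>F u in at_top. indicator {u<..} z * std_normal_density z = 0" for z :: real
        using eventually_ge_at_top[of z] by eventually_elim (simp add: indicator_def)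
    qed
    show "\<forall>\<^sub>F u in at_top. AE z in lborel. norm (indicator {u<..} z * std_normal_density z) \<le> std_normal_density z"
      by (intro always_eventually allI AE_I2) (simp add: indicator_def)
  qed simp_all
  then show ?thesis
    by (simp add: gauss_tail_eq_integral_indicator[abs_def])
qed

section \<open>Integrals of dilations\<close>

lemma integral_dominated_convergence_at:
  fixes s :: "real \<Rightarrow> 'a \<Rightarrow> real" and x :: real
  assumes "f \<in> borel_measurable M" "\<And>t. s t \<in> borel_measurable M" "integrable M w"
    and lim: "AE y in M. ((\<lambda>t. s t y) \<longlongrightarrow> f y) (at x)"
    and bound: "\<forall>\<^sub>F t in at x. AE y in M. norm (s t y) \<le> w y"
  shows "((\<lambda>t. integral\<^sup>L M (s t)) \<longlongrightarrow> integral\<^sup>L M f) (at x)"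
  unfolding tendsto_at_iff_sequentially
proof (intro allI impI)
  fix X :: "nat \<Rightarrow> real"
  assume "\<forall>i. X i \<in> UNIV - {x}" "X \<longlonglongrightarrow> x"
  then have X: "filterlim X (at x) sequentially"
    by (auto simp: filterlim_at)
  from filterlim_iff[THEN iffD1, OF X, rule_format, OF bound]
  obtain N where N: "\<And>n. N \<le> n \<Longrightarrow> AE y in M. norm (s (X n) y) \<le> w y"
    by (auto simp: eventually_sequentially)
  have X_shift: "filterlim (\<lambda>n. X (n + N)) (at x) sequentially"
    by (rule filterlim_compose[OF X filterlim_add_const_nat_at_top])
  have "(\<lambda>n. integral\<^sup>L M (s (X (n + N)))) \<longlonglongrightarrow> integral\<^sup>L M f"
  proof (rule integral_dominated_convergence[where w=w])
    show "AE y in M. (\<lambda>n. s (X (n + N)) y) \<longlonglongrightarrow> f y"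
      using lim by eventually_elim (rule filterlim_compose[OF _ X_shift])
  qed (use assms N in auto)
  then show "((\<lambda>t. integral\<^sup>L M (s t)) \<circ> X) \<longlonglongrightarrow> integral\<^sup>L M f"
    unfolding o_def by (rule LIMSEQ_offset)
qed

lemma integral_mult_pos:
  fixes p k :: "'a \<Rightarrow> real"
  assumes "integrable M (\<lambda>s. p s * k s)" "AE s in M. 0 \<le> p s"
    and "AE s in M. p s \<noteq> 0 \<longrightarrow> 0 < k s" and "integral\<^sup>L M p \<noteq> 0"
  shows "0 < (\<integral>s. p s * k s \<partial>M)"
proof -
  have nonneg: "AE s in M. 0 \<le> p s * k s"
    using assms(2,3) by eventually_elim (metis less_eq_real_def mult_eq_0_iff mult_nonneg_nonneg)
  have "(\<integral>s. p s * k s \<partial>M) \<noteq> 0"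
  proof
    assume "(\<integral>s. p s * k s \<partial>M) = 0"
    then have "AE s in M. p s * k s = 0"
      using integral_nonneg_eq_0_iff_AE[OF assms(1) nonneg] by blast
    then have "AE s in M. p s = 0"
      using assms(3) by eventually_elim auto
    then show False
      using assms(4) integral_eq_zero_AE by blast
  qed
  then show ?thesis
    using integral_nonneg_AE[OF nonneg] by linarith
qed

definition dilation_integral :: "(real \<Rightarrow> real) \<Rightarrow> (real \<Rightarrow> real) \<Rightarrow> (real \<Rightarrow> real) \<Rightarrow> real \<Rightarrow> real" where
  "dilation_integral w c h t = (\<integral>y. w y * h (c y * t) \<partial>lborel)"

lemma integrable_dilation:
  fixes w c h :: "real \<Rightarrow> real"
  assumes "integrable lborel w" "c \<in> borel_measurable borel"
    and supp: "AE y in lborel. w y \<noteq> 0 \<longrightarrow> \<bar>c y\<bar> \<le> B" and "continuous_on UNIV h"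
  shows "integrable lborel (\<lambda>y. w y * h (c y * t))"
proof -
  obtain K where K: "\<And>z. z \<in> cball 0 (B * \<bar>t\<bar>) \<Longrightarrow> norm (h z) \<le> K"
    using continuous_on_compact_bound[of "cball 0 (B * \<bar>t\<bar>)" h] assms(4)
    by (metis compact_cball continuous_on_subset top_greatest)
  have [measurable]: "h \<in> borel_measurable borel" "w \<in> borel_measurable borel"
    using assms by (auto intro: borel_measurable_continuous_onI)
  show ?thesis
  proof (rule Bochner_Integration.integrable_bound[where f="\<lambda>y. K * w y"])
    show "AE y in lborel. norm (w y * h (c y * t)) \<le> norm (K * w y)"
      using supp
    proof eventually_elim
      case (elim y)
      show ?case
      proof (cases "w y = 0")
        case False
        then have "\<bar>h (c y * t)\<bar> \<le> \<bar>K\<bar>"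
          using elim K[of "c y * t"] by (simp add: abs_mult mult_right_mono)
        then have "\<bar>w y\<bar> * \<bar>h (c y * t)\<bar> \<le> \<bar>w y\<bar> * \<bar>K\<bar>"
          by (rule mult_left_mono) simp
        then show ?thesis
          by (simp add: abs_mult mult.commute)
      qed simp
    qed
  qed (use assms in auto)
qed

lemma difference_quotient_dilation_bound:
  fixes h h' :: "real \<Rightarrow> real"
  assumes h': "\<And>z. (h has_real_derivative h' z) (at z)" "continuous_on UNIV h'"
  obtains K where "\<And>c t. \<bar>c\<bar> \<le> B \<Longrightarrow> dist t x < 1 \<Longrightarrow> \<bar>(h (c * t) - h (c * x)) / (t - x)\<bar> \<le> K"
proof -
  let ?R = "B * (\<bar>x\<bar> + 1)"
  obtain M where M: "\<And>z. z \<in> cball 0 ?R \<Longrightarrow> norm (h' z) \<le> M"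
    using continuous_on_compact_bound[of "cball 0 ?R" h'] h'(2)
    by (metis compact_cball continuous_on_subset top_greatest)
  have "\<bar>(h (c * t) - h (c * x)) / (t - x)\<bar> \<le> M * B" if "\<bar>c\<bar> \<le> B" "dist t x < 1" for c t
  proof -
    have "0 \<le> B" "0 \<le> M"
      using that(1) M[of 0] by auto
    have "\<bar>c * t\<bar> \<le> ?R" "\<bar>c * x\<bar> \<le> ?R"
      using that by (auto simp: abs_mult dist_real_def intro!: mult_mono)
    then have "norm (h (c * t) - h (c * x)) \<le> M * norm (c * t - c * x)"
      using h'(1) M
      by (intro field_differentiable_bound[of "{-?R..?R}"]) (auto intro: has_field_derivative_at_within)
    also have "\<dots> = M * (\<bar>c\<bar> * \<bar>t - x\<bar>)"
      by (simp add: abs_mult right_diff_distrib[symmetric])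
    also have "\<dots> \<le> M * (B * \<bar>t - x\<bar>)"
      using that(1) \<open>0 \<le> M\<close> by (intro mult_left_mono mult_right_mono) auto
    finally have "\<bar>h (c * t) - h (c * x)\<bar> \<le> M * B * \<bar>t - x\<bar>"
      by simp
    then show ?thesis
      using \<open>0 \<le> B\<close> \<open>0 \<le> M\<close> by (cases "t = x") (auto simp: abs_divide divide_le_eq)
  qed
  then show ?thesis
    using that by blast
qed

lemma dilation_integral_difference_quotient:
  fixes w c h :: "real \<Rightarrow> real"
  assumes "integrable lborel w" "c \<in> borel_measurable borel"
    and "AE y in lborel. w y \<noteq> 0 \<longrightarrow> \<bar>c y\<bar> \<le> B" and "continuous_on UNIV h"
  shows "(dilation_integral w c h t - dilation_integral w c h x) / (t - x)
    = (\<integral>y. w y * ((h (c y * t) - h (c y * x)) / (t - x)) \<partial>lborel)"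
proof -
  have "dilation_integral w c h t - dilation_integral w c h x
      = (\<integral>y. w y * h (c y * t) - w y * h (c y * x) \<partial>lborel)"
    unfolding dilation_integral_def
    by (rule Bochner_Integration.integral_diff[symmetric]) (rule integrable_dilation[OF assms])+
  then have "(dilation_integral w c h t - dilation_integral w c h x) / (t - x)
      = (\<integral>y. (w y * h (c y * t) - w y * h (c y * x)) / (t - x) \<partial>lborel)"
    by (simp only: integral_divide_zero)
  then show ?thesis
    by (simp only: right_diff_distrib times_divide_eq_right)
qed

lemma tendsto_dilation_difference_quotient:
  fixes w c h h' :: "real \<Rightarrow> real"
  assumes w: "integrable lborel w" and c[measurable]: "c \<in> borel_measurable borel"
    and supp: "AE y in lborel. w y \<noteq> 0 \<longrightarrow> \<bar>c y\<bar> \<le> B"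
    and h': "\<And>z. (h has_real_derivative h' z) (at z)" "continuous_on UNIV h'"
  shows "((\<lambda>t. \<integral>y. w y * ((h (c y * t) - h (c y * x)) / (t - x)) \<partial>lborel)
    \<longlongrightarrow> (\<integral>y. w y * (h' (c y * x) * c y) \<partial>lborel)) (at x)"
proof -
  have "continuous_on UNIV h"
    using h'(1) by (meson DERIV_isCont continuous_at_imp_continuous_on)
  then have [measurable]: "h \<in> borel_measurable borel" "h' \<in> borel_measurable borel" "w \<in> borel_measurable borel"
    using w h'(2) by (auto intro: borel_measurable_continuous_onI)
  obtain K where K: "\<And>c t. \<bar>c\<bar> \<le> B \<Longrightarrow> dist t x < 1 \<Longrightarrow> \<bar>(h (c * t) - h (c * x)) / (t - x)\<bar> \<le> K"
    using difference_quotient_dilation_bound[OF h'] by blast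
  show ?thesis
  proof (rule integral_dominated_convergence_at[where w="\<lambda>y. \<bar>w y\<bar> * K"])
    show "AE y in lborel. ((\<lambda>t. w y * ((h (c y * t) - h (c y * x)) / (t - x)))
        \<longlongrightarrow> w y * (h' (c y * x) * c y)) (at x)"
    proof (rule AE_I2)
      fix y
      have "((\<lambda>t. h (c y * t)) has_real_derivative h' (c y * x) * c y) (at x)"
        using DERIV_chain2[OF h'(1) DERIV_cmult[OF DERIV_ident, of "c y" x]] by simp
      then show "((\<lambda>t. w y * ((h (c y * t) - h (c y * x)) / (t - x))) \<longlongrightarrow> w y * (h' (c y * x) * c y)) (at x)"
        unfolding has_field_derivative_iff by (rule tendsto_mult_left)
    qed
    have "AE y in lborel. norm (w y * ((h (c y * t) - h (c y * x)) / (t - x))) \<le> \<bar>w y\<bar> * K"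
      if "dist t x < 1" for t
      using supp
    proof eventually_elim
      case (elim y)
      show ?case
      proof (cases "w y = 0")
        case False
        then have "\<bar>(h (c y * t) - h (c y * x)) / (t - x)\<bar> \<le> K"
          using elim K that by blast
        then show ?thesis
          unfolding real_norm_def abs_mult by (rule mult_left_mono) simp
      qed simp
    qed
    then show "\<forall>\<^sub>F t in at x. AE y in lborel.
        norm (w y * ((h (c y * t) - h (c y * x)) / (t - x))) \<le> \<bar>w y\<bar> * K"
      unfolding eventually_at by (auto intro!: exI[of _ 1])
    show "integrable lborel (\<lambda>y. \<bar>w y\<bar> * K)"
      using w by (intro integrable_mult_left integrable_abs)
    show "(\<lambda>y. w y * (h' (c y * x) * c y)) \<in> borel_measurable lborel"
      by measurable
    show "(\<lambda>y. w y * ((h (c y * t) - h (c y * x)) / (t - x))) \<in> borel_measurable lborel" for t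
      by measurable
  qed
qed

lemma has_real_derivative_dilation_integral:
  fixes w c h h' :: "real \<Rightarrow> real"
  assumes "integrable lborel w" "c \<in> borel_measurable borel"
    and "AE y in lborel. w y \<noteq> 0 \<longrightarrow> \<bar>c y\<bar> \<le> B"
    and h': "\<And>z. (h has_real_derivative h' z) (at z)" "continuous_on UNIV h'"
  shows "(dilation_integral w c h has_real_derivative dilation_integral (\<lambda>y. w y * c y) c h' x) (at x)"
proof -
  have "continuous_on UNIV h"
    using h'(1) by (meson DERIV_isCont continuous_at_imp_continuous_on)
  then show ?thesis
    using tendsto_dilation_difference_quotient[OF assms]
    unfolding has_field_derivative_iff dilation_integral_difference_quotient[OF assms(1-3) \<open>continuous_on UNIV h\<close>]
    by (simp add: dilation_integral_def mult_ac)
qed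

lemma has_real_derivative_dilation_integral_iter:
  fixes w c h :: "real \<Rightarrow> real"
  assumes w: "integrable lborel w" and c: "c \<in> borel_measurable borel"
    and supp: "AE y in lborel. w y \<noteq> 0 \<longrightarrow> \<bar>c y\<bar> \<le> B"
    and h: "\<And>n. differentiable_upto n UNIV h"
  shows "(dilation_integral (\<lambda>y. w y * c y ^ k) c ((deriv ^^ k) h) has_real_derivative
           dilation_integral (\<lambda>y. w y * c y ^ Suc k) c ((deriv ^^ Suc k) h) x) (at x)"
proof -
  have "continuous_on UNIV (\<lambda>z::real. z ^ k)"
    by (intro continuous_intros)
  then have "integrable lborel (\<lambda>y. w y * c y ^ k)"
    using integrable_dilation[OF w c supp, of "\<lambda>z. z ^ k" 1] by simp
  moreover have "AE y in lborel. w y * c y ^ k \<noteq> 0 \<longrightarrow> \<bar>c y\<bar> \<le> B"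
    using supp by eventually_elim auto
  moreover have "((deriv ^^ k) h has_real_derivative (deriv ^^ Suc k) h z) (at z)" for z
    using differentiable_upto_has_real_derivative_iter[OF h[of k]] by simp
  moreover have "continuous_on UNIV ((deriv ^^ Suc k) h)"
    using differentiable_upto_continuous_on_iter[OF h[of "Suc k"] order_refl] .
  ultimately have "(dilation_integral (\<lambda>y. w y * c y ^ k) c ((deriv ^^ k) h) has_real_derivative
      dilation_integral (\<lambda>y. w y * c y ^ k * c y) c ((deriv ^^ Suc k) h) x) (at x)"
    by (rule has_real_derivative_dilation_integral[OF _ c])
  then show ?thesis
    by (simp add: mult_ac)
qed

lemma deriv_iter_dilation_integral:
  fixes w c h :: "real \<Rightarrow> real"
  assumes "integrable lborel w" "c \<in> borel_measurable borel"
    and "AE y in lborel. w y \<noteq> 0 \<longrightarrow> \<bar>c y\<bar> \<le> B"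
    and "\<And>n. differentiable_upto n UNIV h"
  shows "(deriv ^^ k) (dilation_integral w c h) = dilation_integral (\<lambda>y. w y * c y ^ k) c ((deriv ^^ k) h)"
proof (induction k)
  case (Suc k)
  then show ?case
    using DERIV_imp_deriv[OF has_real_derivative_dilation_integral_iter[OF assms]] by auto
qed simp

lemma differentiable_upto_dilation_integral:
  fixes w c h :: "real \<Rightarrow> real"
  assumes "integrable lborel w" "c \<in> borel_measurable borel"
    and "AE y in lborel. w y \<noteq> 0 \<longrightarrow> \<bar>c y\<bar> \<le> B"
    and "\<And>n. differentiable_upto n UNIV h"
  shows "differentiable_upto n UNIV (dilation_integral w c h)"
  using has_real_derivative_dilation_integral_iter[OF assms]
  by (auto simp: differentiable_upto_def deriv_iter_dilation_integral[OF assms] real_differentiable_def)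

lemma dilation_integral_pos:
  fixes w c h :: "real \<Rightarrow> real"
  assumes "integrable lborel w" "c \<in> borel_measurable borel"
    and "AE y in lborel. w y \<noteq> 0 \<longrightarrow> \<bar>c y\<bar> \<le> B"
    and "AE y in lborel. 0 \<le> w y" "integral\<^sup>L lborel w \<noteq> 0"
    and "continuous_on UNIV h" "\<And>z. 0 < h z"
  shows "0 < dilation_integral w c h t"
  unfolding dilation_integral_def
  using assms by (intro integral_mult_pos integrable_dilation) auto

lemma deriv_dilation_integral_neg:
  fixes w c h h' :: "real \<Rightarrow> real"
  assumes w: "integrable lborel w" and c: "c \<in> borel_measurable borel"
    and supp_abs: "AE y in lborel. w y \<noteq> 0 \<longrightarrow> \<bar>c y\<bar> \<le> B"
    and "AE y in lborel. w y \<noteq> 0 \<longrightarrow> 0 < c y"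
    and "AE y in lborel. 0 \<le> w y" "integral\<^sup>L lborel w \<noteq> 0"
    and h': "\<And>z. (h has_real_derivative h' z) (at z)" "continuous_on UNIV h'" "\<And>z. h' z < 0"
  shows "deriv (dilation_integral w c h) t < 0"
proof -
  have "continuous_on UNIV (\<lambda>z. - 1 * z * h' (z * t))"
    by (intro continuous_intros continuous_on_compose2[OF h'(2)]) auto
  then have "integrable lborel (\<lambda>y. w y * (- 1 * c y * h' (c y * t)))"
    using integrable_dilation[OF w c supp_abs, of "\<lambda>z. - 1 * z * h' (z * t)" 1] by simp
  then have "0 < (\<integral>y. w y * (- 1 * c y * h' (c y * t)) \<partial>lborel)"
    using assms h'(3) by (intro integral_mult_pos) (auto elim: AE_mp intro!: mult_pos_neg)
  then show ?thesis
    using DERIV_imp_deriv[OF has_real_derivative_dilation_integral[OF w c supp_abs h'(1,2)]]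
    by (simp add: dilation_integral_def mult_ac)
qed

lemma tendsto_dilation_integral_at_top:
  fixes w c h :: "real \<Rightarrow> real"
  assumes w: "integrable lborel w" and c: "c \<in> borel_measurable borel"
    and supp: "AE y in lborel. w y \<noteq> 0 \<longrightarrow> 0 < c y"
    and h: "h \<in> borel_measurable borel" "\<And>z. \<bar>h z\<bar> \<le> K" "(h \<longlongrightarrow> 0) at_top"
  shows "(dilation_integral w c h \<longlongrightarrow> 0) at_top"
proof -
  note [measurable] = c h(1)
  have "((\<lambda>t. \<integral>y. w y * h (c y * t) \<partial>lborel) \<longlongrightarrow> (\<integral>(y::real). 0 \<partial>lborel)) at_top"
  proof (rule integral_dominated_convergence_at_top[where w="\<lambda>y. K * \<bar>w y\<bar>"])
    show "AE y in lborel. ((\<lambda>t. w y * h (c y * t)) \<longlongrightarrow> 0) at_top"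
      using supp
    proof eventually_elim
      case (elim y)
      show ?case
      proof (cases "w y = 0")
        case False
        then have "filterlim (\<lambda>t. c y * t) at_top at_top"
          using elim by (intro filterlim_tendsto_pos_mult_at_top[OF tendsto_const _ filterlim_ident]) auto
        then show ?thesis
          using tendsto_mult_left[OF filterlim_compose[OF h(3)], of _ _ "w y"] by simp
      qed simp
    qed
    show "\<forall>\<^sub>F t in at_top. AE y in lborel. norm (w y * h (c y * t)) \<le> K * \<bar>w y\<bar>"
      using h(2) by (intro always_eventually allI AE_I2) (simp add: abs_mult mult.commute[of K] mult_left_mono)
  qed (use w in auto)
  then show ?thesis
    by (simp add: dilation_integral_def[abs_def])
qed

section \<open>Gaussian smoothing of the exterior mass\<close>

lemma normal_density_shift_scale:
  assumes "0 < \<eta>" "c\<^sup>2 = \<eta>\<^sup>2"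
  shows "normal_density s \<eta> (s + c * z) = std_normal_density z / \<eta>"
  using assms by (simp add: normal_density_def power_mult_distrib real_sqrt_mult)

lemma integral_normal_density_affine_indicator:
  assumes "0 < \<eta>" "c\<^sup>2 = \<eta>\<^sup>2" "\<And>z. s + c * z \<in> A \<longleftrightarrow> z \<in> B"
  shows "(\<integral>\<sigma>. indicator A \<sigma> * normal_density s \<eta> \<sigma> \<partial>lborel)
    = (\<integral>z. indicator B z * std_normal_density z \<partial>lborel)"
proof -
  have "c \<noteq> 0" "\<bar>c\<bar> = \<eta>"
    using assms(1,2) by (auto simp: power2_eq_iff)
  have "(\<integral>\<sigma>. indicator A \<sigma> * normal_density s \<eta> \<sigma> \<partial>lborel)
      = \<bar>c\<bar> *\<^sub>R (\<integral>z. indicator A (s + c * z) * normal_density s \<eta> (s + c * z) \<partial>lborel)"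
    by (rule lborel_integral_real_affine[OF \<open>c \<noteq> 0\<close>])
  also have "\<dots> = \<eta> * (\<integral>z. indicator B z * std_normal_density z / \<eta> \<partial>lborel)"
    using assms by (simp add: \<open>\<bar>c\<bar> = \<eta>\<close> normal_density_shift_scale indicator_def)
  finally show ?thesis
    using assms(1) by simp
qed

lemma integral_normal_density_greaterThan:
  "0 < \<eta> \<Longrightarrow> (\<integral>\<sigma>. indicator {a<..} \<sigma> * normal_density s \<eta> \<sigma> \<partial>lborel) = gauss_tail ((a - s) / \<eta>)"
  by (subst integral_normal_density_affine_indicator[where c=\<eta> and B="{(a - s) / \<eta><..}"])
    (auto simp: gauss_tail_eq_integral_indicator field_simps)

lemma integral_normal_density_lessThan:
  "0 < \<eta> \<Longrightarrow> (\<integral>\<sigma>. indicator {..<a} \<sigma> * normal_density s \<eta> \<sigma> \<partial>lborel) = gauss_tail ((s - a) / \<eta>)"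
  by (subst integral_normal_density_affine_indicator[where c="- \<eta>" and B="{(s - a) / \<eta><..}"])
    (auto simp: gauss_tail_eq_integral_indicator field_simps)

lemma integral_normal_density_outside_unit_interval:
  assumes "0 < \<eta>"
  shows "(\<integral>\<sigma>. indicator {\<sigma>. 1 < \<bar>\<sigma>\<bar>} \<sigma> * normal_density s \<eta> \<sigma> \<partial>lborel)
    = gauss_tail ((1 - s) / \<eta>) + gauss_tail ((1 + s) / \<eta>)"
proof -
  have "indicator {\<sigma>. 1 < \<bar>\<sigma>\<bar>} \<sigma> = (indicator {1<..} \<sigma> + indicator {..<-1} \<sigma> :: real)" for \<sigma> :: real
    by (auto simp: indicator_def)
  moreover have "integrable lborel (\<lambda>\<sigma>. indicator A \<sigma> * normal_density s \<eta> \<sigma>)" if "A \<in> sets borel" for A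
    using integrable_mult_indicator[of A lborel "normal_density s \<eta>"] that assms by simp
  ultimately show ?thesis
    using assms
    by (simp add: distrib_right integral_normal_density_greaterThan integral_normal_density_lessThan add.commute)
qed

lemma borel_measurable_normal_density_pair:
  assumes "0 < \<eta>"
  shows "(\<lambda>x. normal_density (fst x) \<eta> (snd x)) \<in> borel_measurable (lborel \<Otimes>\<^sub>M lborel)"
proof -
  have "continuous_on UNIV (\<lambda>x::real \<times> real. normal_density (fst x) \<eta> (snd x))"
    unfolding normal_density_def using assms by (intro continuous_intros) auto
  then show ?thesis
    unfolding lborel_prod by (simp add: borel_measurable_continuous_onI)
qed

lemma integrable_mixture_normal_density:
  fixes p :: "real \<Rightarrow> real"
  assumes p: "integrable lborel p" and "0 < \<eta>"
  shows "integrable (lborel \<Otimes>\<^sub>M lborel) (\<lambda>(s, \<sigma>). p s * normal_density s \<eta> \<sigma>)"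
proof (rule lborel_pair.Fubini_integrable)
  have "(\<lambda>x. p (fst x)) \<in> borel_measurable (lborel \<Otimes>\<^sub>M lborel)"
    by (rule measurable_compose[OF measurable_fst]) (use borel_measurable_integrable[OF p] in simp)
  then show "(\<lambda>(s, \<sigma>). p s * normal_density s \<eta> \<sigma>) \<in> borel_measurable (lborel \<Otimes>\<^sub>M lborel)"
    unfolding case_prod_beta' using borel_measurable_normal_density_pair[OF \<open>0 < \<eta>\<close>]
    by (rule borel_measurable_times)
  have "(\<integral>\<sigma>. norm (p s * normal_density s \<eta> \<sigma>) \<partial>lborel) = \<bar>p s\<bar>" for s
    using \<open>0 < \<eta>\<close> by (simp add: abs_mult)
  then show "integrable lborel (\<lambda>s. \<integral>\<sigma>. norm (case_prod (\<lambda>s \<sigma>. p s * normal_density s \<eta> \<sigma>) (s, \<sigma>)) \<partial>lborel)"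
    using p by simp
  show "AE s in lborel. integrable lborel (\<lambda>\<sigma>. case_prod (\<lambda>s \<sigma>. p s * normal_density s \<eta> \<sigma>) (s, \<sigma>))"
    using \<open>0 < \<eta>\<close> by simp
qed

lemma integral_indicator_mixture_normal_density:
  fixes p :: "real \<Rightarrow> real"
  assumes p: "integrable lborel p" and "0 < \<eta>" and [measurable]: "A \<in> sets borel"
  shows "(\<integral>\<sigma>. indicator A \<sigma> * (\<integral>s. p s * normal_density s \<eta> \<sigma> \<partial>lborel) \<partial>lborel)
       = (\<integral>s. p s * (\<integral>\<sigma>. indicator A \<sigma> * normal_density s \<eta> \<sigma> \<partial>lborel) \<partial>lborel)"
proof -
  define f where "f s \<sigma> = indicator A \<sigma> * (p s * normal_density s \<eta> \<sigma>)" for s \<sigma>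
  note mixture = integrable_mixture_normal_density[OF p \<open>0 < \<eta>\<close>]
  have "(\<lambda>x. indicator A (snd x) :: real) \<in> borel_measurable (lborel \<Otimes>\<^sub>M lborel)"
    by measurable
  then have "case_prod f \<in> borel_measurable (lborel \<Otimes>\<^sub>M lborel)"
    unfolding f_def case_prod_beta'
    using borel_measurable_integrable[OF mixture] by (simp add: case_prod_beta' borel_measurable_times)
  with mixture have "integrable (lborel \<Otimes>\<^sub>M lborel) (case_prod f)"
    by (rule Bochner_Integration.integrable_bound)
      (auto intro!: AE_I2 simp: f_def abs_mult split: split_indicator)
  then have "(\<integral>\<sigma>. (\<integral>s. f s \<sigma> \<partial>lborel) \<partial>lborel) = (\<integral>s. (\<integral>\<sigma>. f s \<sigma> \<partial>lborel) \<partial>lborel)"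
    by (rule lborel_pair.Fubini_integral)
  moreover have "(\<integral>s. f s \<sigma> \<partial>lborel) = indicator A \<sigma> * (\<integral>s. p s * normal_density s \<eta> \<sigma> \<partial>lborel)" for \<sigma>
    unfolding f_def by (rule integral_mult_right_zero)
  moreover have "(\<integral>\<sigma>. f s \<sigma> \<partial>lborel) = p s * (\<integral>\<sigma>. indicator A \<sigma> * normal_density s \<eta> \<sigma> \<partial>lborel)" for s
  proof -
    have "f s = (\<lambda>\<sigma>. p s * (indicator A \<sigma> * normal_density s \<eta> \<sigma>))"
      by (auto simp: f_def)
    then show ?thesis
      by (simp only: integral_mult_right_zero)
  qed
  ultimately show ?thesis
    by (simp only:)
qed

lemma gauss_eq_normal_density: "0 < \<eta> \<Longrightarrow> gauss \<eta> (\<sigma> - s) = normal_density s \<eta> \<sigma>"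
  by (simp add: gauss_def normal_density_def real_sqrt_mult power2_commute)

(* For s perturbed by Gaussian noise of standard deviation 1 / t, the bracket is the probability
   of leaving [-1, 1]; exit_mass averages it over s distributed according to p. *)
definition exit_mass :: "(real \<Rightarrow> real) \<Rightarrow> real \<Rightarrow> real" where
  "exit_mass p t = (\<integral>s. p s * (gauss_tail ((1 - s) * t) + gauss_tail ((1 + s) * t)) \<partial>lborel)"

lemma F_fun_eq_exit_mass:
  assumes "integrable lborel p0" "0 < x"
  shows "F_fun \<alpha> p0 x = \<alpha> * exit_mass p0 (1 / sqrt (2 * x))"
proof -
  define \<eta> where "\<eta> = sqrt (2 * x)"
  have "0 < \<eta>"
    using assms(2) by (simp add: \<eta>_def)
  have "F_fun \<alpha> p0 x
      = \<alpha> * (\<integral>\<sigma>. indicator {\<sigma>. 1 < \<bar>\<sigma>\<bar>} \<sigma> * (\<integral>s. p0 s * normal_density s \<eta> \<sigma> \<partial>lborel) \<partial>lborel)"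
    using assms(2) \<open>0 < \<eta>\<close> by (simp add: F_fun_def set_lebesgue_integral_def gauss_eq_normal_density \<eta>_def)
  also have "\<dots> = \<alpha> * (\<integral>s. p0 s * (gauss_tail ((1 - s) / \<eta>) + gauss_tail ((1 + s) / \<eta>)) \<partial>lborel)"
    using assms(1) \<open>0 < \<eta>\<close>
    by (simp add: integral_indicator_mixture_normal_density integral_normal_density_outside_unit_interval)
  finally show ?thesis
    by (simp add: exit_mass_def \<eta>_def)
qed

lemma D_fun_eq_0_imp_support:
  assumes "0 < \<alpha>" "integrable lborel p0" "AE s in lborel. 0 \<le> p0 s" "D_fun \<alpha> p0 = 0"
  shows "AE s in lborel. p0 s \<noteq> 0 \<longrightarrow> \<bar>s\<bar> < 1"
proof -
  let ?A = "{\<sigma>::real. 1 < \<bar>\<sigma>\<bar>}"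
  have "?A \<in> sets borel"
    by measurable
  then have "integrable lborel (\<lambda>\<sigma>. indicator ?A \<sigma> * p0 \<sigma>)"
    using integrable_mult_indicator[OF _ assms(2), of ?A] by simp
  moreover have "AE \<sigma> in lborel. 0 \<le> indicator ?A \<sigma> * p0 \<sigma>"
    using assms(3) by eventually_elim simp
  moreover have "(\<integral>\<sigma>. indicator ?A \<sigma> * p0 \<sigma> \<partial>lborel) = 0"
    using assms(1,4) by (simp add: D_fun_def set_lebesgue_integral_def)
  ultimately have "AE \<sigma> in lborel. indicator ?A \<sigma> * p0 \<sigma> = 0"
    using integral_nonneg_eq_0_iff_AE by blast
  then show ?thesis
    using AE_lborel_singleton[of 1] AE_lborel_singleton[of "- 1"]
    by eventually_elim (auto simp: indicator_def)
qed

context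
  fixes p :: "real \<Rightarrow> real"
  assumes p_integrable: "integrable lborel p" and p_nonneg: "AE s in lborel. 0 \<le> p s"
    and p_nonzero: "integral\<^sup>L lborel p \<noteq> 0" and p_support: "AE s in lborel. p s \<noteq> 0 \<longrightarrow> \<bar>s\<bar> < 1"
begin

lemma dilation_factors_on_support:
  "AE s in lborel. p s \<noteq> 0 \<longrightarrow> \<bar>1 - s\<bar> \<le> 2" "AE s in lborel. p s \<noteq> 0 \<longrightarrow> \<bar>1 + s\<bar> \<le> 2"
  "AE s in lborel. p s \<noteq> 0 \<longrightarrow> 0 < 1 - s" "AE s in lborel. p s \<noteq> 0 \<longrightarrow> 0 < 1 + s"
  using p_support by (auto elim!: eventually_mono)

lemma exit_mass_eq_dilation_integrals:
  "exit_mass p = (\<lambda>t. dilation_integral p (\<lambda>s. 1 - s) gauss_tail t + dilation_integral p (\<lambda>s. 1 + s) gauss_tail t)"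
proof
  fix t
  have "integrable lborel (\<lambda>s. p s * gauss_tail ((1 - s) * t))" "integrable lborel (\<lambda>s. p s * gauss_tail ((1 + s) * t))"
    using dilation_factors_on_support(1,2)
    by (auto intro!: integrable_dilation[OF p_integrable] continuous_on_gauss_tail)
  then show "exit_mass p t = dilation_integral p (\<lambda>s. 1 - s) gauss_tail t + dilation_integral p (\<lambda>s. 1 + s) gauss_tail t"
    by (simp add: exit_mass_def dilation_integral_def distrib_left)
qed

lemma differentiable_upto_exit_mass: "differentiable_upto n UNIV (exit_mass p)"
  unfolding exit_mass_eq_dilation_integrals
  using dilation_factors_on_support(1,2)
  by (intro differentiable_upto_add differentiable_upto_dilation_integral[OF p_integrable]
      differentiable_upto_gauss_tail) auto

lemma exit_mass_pos: "0 < exit_mass p t"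
proof -
  have "0 < dilation_integral p (\<lambda>s. 1 - s) gauss_tail t" "0 < dilation_integral p (\<lambda>s. 1 + s) gauss_tail t"
    using dilation_factors_on_support(1,2) p_nonneg p_nonzero
    by (auto intro!: dilation_integral_pos[OF p_integrable] continuous_on_gauss_tail gauss_tail_pos)
  then show ?thesis
    by (simp add: exit_mass_eq_dilation_integrals)
qed

lemma deriv_exit_mass_neg: "deriv (exit_mass p) t < 0"
proof -
  have deriv_I: "(dilation_integral p c gauss_tail has_real_derivative deriv (dilation_integral p c gauss_tail) t) (at t)"
    if "c \<in> borel_measurable borel" "AE s in lborel. p s \<noteq> 0 \<longrightarrow> \<bar>c s\<bar> \<le> 2" for c
    using differentiable_upto_dilation_integral[OF p_integrable that differentiable_upto_gauss_tail, of 0]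
    by (simp add: differentiable_upto_imp_has_real_derivative)
  have "deriv (exit_mass p) t
      = deriv (dilation_integral p (\<lambda>s. 1 - s) gauss_tail) t + deriv (dilation_integral p (\<lambda>s. 1 + s) gauss_tail) t"
    unfolding exit_mass_eq_dilation_integrals
    by (intro DERIV_imp_deriv DERIV_add deriv_I dilation_factors_on_support) auto
  have "continuous_on UNIV (\<lambda>z. - std_normal_density z)"
    unfolding normal_density_def by (intro continuous_intros) auto
  then have "deriv (dilation_integral p (\<lambda>s. 1 - s) gauss_tail) t < 0"
    "deriv (dilation_integral p (\<lambda>s. 1 + s) gauss_tail) t < 0"
    using dilation_factors_on_support p_nonneg p_nonzero normal_density_pos[of 1 0]
    by (auto intro!: deriv_dilation_integral_neg[OF p_integrable _ _ _ _ _ has_real_derivative_gauss_tail])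
  with \<open>deriv (exit_mass p) t = _\<close> show ?thesis
    by linarith
qed

lemma tendsto_exit_mass_at_top: "(exit_mass p \<longlongrightarrow> 0) at_top"
proof -
  have "\<bar>gauss_tail z\<bar> \<le> 1" for z
    using gauss_tail_pos[of z] gauss_tail_le_1[of z] by simp
  then have "(dilation_integral p (\<lambda>s. 1 - s) gauss_tail \<longlongrightarrow> 0) at_top"
    "(dilation_integral p (\<lambda>s. 1 + s) gauss_tail \<longlongrightarrow> 0) at_top"
    using dilation_factors_on_support(3,4)
    by (auto intro!: tendsto_dilation_integral_at_top[OF p_integrable] tendsto_gauss_tail_at_top)
  then show ?thesis
    unfolding exit_mass_eq_dilation_integrals using tendsto_add by fastforce
qed

end

section \<open>The reparametrisation x |-> 1 / sqrt (2 x)\<close>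

lemma has_real_derivative_inverse_sqrt:
  assumes "0 < x"
  shows "((\<lambda>x. 1 / sqrt (2 * x)) has_real_derivative - 1 / (2 * x * sqrt (2 * x))) (at x)"
  using assms by (auto intro!: derivative_eq_intros simp: field_simps)

lemma differentiable_upto_inverse_sqrt: "differentiable_upto n {0<..} (\<lambda>x. 1 / sqrt (2 * x))"
proof -
  have "differentiable_upto n {0<..} (\<lambda>x. 1 / sqrt 2 * x powr (- 1 / 2))"
    by (rule differentiable_upto_mult[OF open_greaterThan differentiable_upto_const differentiable_upto_powr])
  moreover have "1 / sqrt 2 * x powr (- 1 / 2) = 1 / sqrt (2 * x)" if "x \<in> {0<..}" for x :: real
    using that by (simp add: powr_minus_divide powr_half_sqrt real_sqrt_mult)
  ultimately show ?thesis
    by (rule differentiable_upto_cong[OF open_greaterThan, rotated])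
qed

lemma filterlim_inverse_sqrt_at_right_0: "filterlim (\<lambda>x::real. 1 / sqrt (2 * x)) at_top (at_right 0)"
  by real_asymp

lemma smooth_on_open_rescaled_profile:
  fixes F H :: "real \<Rightarrow> real"
  assumes H: "\<And>n. differentiable_upto n UNIV H"
    and F: "\<And>x. 0 < x \<Longrightarrow> F x = \<alpha> * H (1 / sqrt (2 * x))"
  shows "smooth_on_open {0<..} F"
  unfolding smooth_on_open_iff_differentiable_upto
proof
  fix n
  have "differentiable_upto n {0<..} (\<lambda>x. H (1 / sqrt (2 * x)))"
    by (rule differentiable_upto_compose[OF open_greaterThan subset_UNIV H differentiable_upto_inverse_sqrt])
  then have "differentiable_upto n {0<..} (\<lambda>x. \<alpha> * H (1 / sqrt (2 * x)))"
    by (rule differentiable_upto_mult[OF open_greaterThan differentiable_upto_const])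
  then show "differentiable_upto n {0<..} F"
    by (rule differentiable_upto_cong[OF open_greaterThan, rotated]) (simp add: F)
qed

lemma has_real_derivative_rescaled_profile:
  fixes F H :: "real \<Rightarrow> real"
  assumes "0 < x" "H differentiable (at (1 / sqrt (2 * x)))"
    and F: "\<And>x. 0 < x \<Longrightarrow> F x = \<alpha> * H (1 / sqrt (2 * x))"
  shows "(F has_real_derivative \<alpha> * (deriv H (1 / sqrt (2 * x)) * (- 1 / (2 * x * sqrt (2 * x))))) (at x)"
proof -
  have "((\<lambda>x. \<alpha> * H (1 / sqrt (2 * x))) has_real_derivative
      \<alpha> * (deriv H (1 / sqrt (2 * x)) * (- 1 / (2 * x * sqrt (2 * x))))) (at x)"
    using assms(2) by (intro DERIV_cmult DERIV_chain2[OF _ has_real_derivative_inverse_sqrt[OF \<open>0 < x\<close>]])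
      (simp add: DERIV_deriv_iff_real_differentiable)
  then show ?thesis
    by (rule has_field_derivative_transform_within_open[where S="{0<..}"]) (use assms F in auto)
qed

lemma deriv_rescaled_profile_pos:
  fixes F H :: "real \<Rightarrow> real"
  assumes "0 < \<alpha>" "0 < x" and H: "\<And>t. H differentiable (at t)" "\<And>t. deriv H t < 0"
    and F: "\<And>x. 0 < x \<Longrightarrow> F x = \<alpha> * H (1 / sqrt (2 * x))"
  shows "0 < deriv F x"
proof -
  let ?d = "- 1 / (2 * x * sqrt (2 * x))"
  have "deriv F x = \<alpha> * (deriv H (1 / sqrt (2 * x)) * ?d)"
    by (rule DERIV_imp_deriv[OF has_real_derivative_rescaled_profile[OF \<open>0 < x\<close> H(1) F]])
  moreover have "?d < 0"
    using \<open>0 < x\<close> by (simp add: divide_neg_pos)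
  then have "0 < deriv H (1 / sqrt (2 * x)) * ?d"
    using H(2) by (intro mult_neg_neg)
  ultimately show ?thesis
    using \<open>0 < \<alpha>\<close> by (simp only: mult_pos_pos)
qed

lemma continuous_on_rescaled_profile:
  fixes F H :: "real \<Rightarrow> real"
  assumes H: "\<And>t. H differentiable (at t)" "(H \<longlongrightarrow> 0) at_top"
    and F: "F 0 = 0" "\<And>x. 0 < x \<Longrightarrow> F x = \<alpha> * H (1 / sqrt (2 * x))"
  shows "continuous_on {0..} F"
  unfolding continuous_on_eq_continuous_within
proof
  fix x :: real
  assume "x \<in> {0..}"
  show "continuous (at x within {0..}) F"
  proof (cases "x = 0")
    case True
    have "((\<lambda>x. \<alpha> * H (1 / sqrt (2 * x))) \<longlongrightarrow> \<alpha> * 0) (at_right 0)"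
      by (rule tendsto_mult[OF tendsto_const filterlim_compose[OF H(2) filterlim_inverse_sqrt_at_right_0]])
    moreover have "\<forall>\<^sub>F x in at_right 0. \<alpha> * H (1 / sqrt (2 * x)) = F x"
      using eventually_at_right_less[of "0::real"] by eventually_elim (simp add: F)
    ultimately have "(F \<longlongrightarrow> F 0) (at_right 0)"
      using F(1) tendsto_cong by fastforce
    then show ?thesis
      by (simp add: True continuous_within at_within_Ici_at_right)
  next
    case False
    then have "0 < x"
      using \<open>x \<in> {0..}\<close> by simp
    then have "isCont F x"
      using has_real_derivative_rescaled_profile[OF _ H(1) F(2)] DERIV_isCont by blast
    then show ?thesis
      by (rule continuous_at_imp_continuous_within)
  qed
qed

theorem lemma4p1:
  fixes \<alpha> :: real and p0 :: "real \<Rightarrow> real"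
  assumes "\<alpha> > 0"
    and "integrable lborel p0"
    and "\<exists>M. AE x in lborel. \<bar>p0 x\<bar> \<le> M"
    and "AE x in lborel. p0 x \<ge> 0"
    and "(LINT x|lborel. p0 x) = 1"
    and "D_fun \<alpha> p0 = 0"
  shows "continuous_on {0..} (F_fun \<alpha> p0)
    \<and> smooth_on_open {0<..} (F_fun \<alpha> p0)
    \<and> (\<forall>x>0. F_fun \<alpha> p0 x > 0)
    \<and> (\<forall>x>0. deriv (F_fun \<alpha> p0) x > 0)"
proof -
  have support: "AE s in lborel. p0 s \<noteq> 0 \<longrightarrow> \<bar>s\<bar> < 1"
    by (rule D_fun_eq_0_imp_support[OF assms(1,2,4,6)])
  have nonzero: "integral\<^sup>L lborel p0 \<noteq> 0"
    using assms(5) by simp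
  note H_smooth = differentiable_upto_exit_mass[OF assms(2,4) nonzero support]
    and H_pos = exit_mass_pos[OF assms(2,4) nonzero support]
    and H_decreasing = deriv_exit_mass_neg[OF assms(2,4) nonzero support]
    and H_limit = tendsto_exit_mass_at_top[OF assms(2,4) nonzero support]
  have H_differentiable: "exit_mass p0 differentiable (at t)" for t
    using H_smooth[of 0] by (simp add: differentiable_upto_0)
  have F0: "F_fun \<alpha> p0 0 = 0"
    using assms(6) by (simp add: F_fun_def)
  note F = F_fun_eq_exit_mass[OF assms(2)]
  show ?thesis
    using continuous_on_rescaled_profile[OF H_differentiable H_limit F0 F]
      smooth_on_open_rescaled_profile[OF H_smooth F]
      deriv_rescaled_profile_pos[OF assms(1) _ H_differentiable H_decreasing F]
      H_pos assms(1) F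
    by auto
qed

end
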